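(* Let $(l_n)_{n\ge 1}$, $(r_n)_{n\ge 1}$ be real numbers with $l_n,r_n>0$ and $l_n+r_n=1$, let $k\ge 1$ be an integer, and let $(X_m)_{m\ge 0}$ be the birth-death chain with these probabilities and $X_0=k$; let $T_\Delta$ be its first hitting time of $0$ ($T_\Delta=\infty$ if $0$ is never hit). Suppose that $$\sum_{n=1}^{\infty}\Big|1-\frac{l_n}{r_n}\Big|<\infty.$$ Then for every non-decreasing sequence of stopping times $(T_m)_{m\ge1}$ with $E[T_m]<\infty$ for all $m$ and $T_m\to T_\Delta$ almost surely, the limit $\lim_{m\to\infty}E[X_{T_m}]$ exists and lies in $(0,\infty)$.
   Context: The birth-death chain: $(X_m)$ is a Markov chain on the nonnegative integers which from a state $n\ge 1$ moves to $n+1$ with probability $r_n$ and to $n-1$ with probability $l_n$, and for which $0$ is absorbing. Stopping times are with respect to the natural filtration of $(X_m)$. *)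

theory Defs
  imports "HOL-Probability.Probability"
begin

definition bd_trans :: "(nat \<Rightarrow> real) \<Rightarrow> (nat \<Rightarrow> real) \<Rightarrow> nat \<Rightarrow> nat \<Rightarrow> real" where
  "bd_trans l r x y =
     (if x = 0 then (if y = 0 then 1 else 0)
      else if y = Suc x then r x
      else if Suc y = x then l x
      else 0)"

text \<open>X is (in law) the birth-death chain with probabilities l, r started at k:
  X 0 = k almost surely, and for every history x_0..x_m the conditional probability
  of X_(m+1) = y is bd_trans l r x_m y (Markov property with these transitions).\<close>
definition birth_death_chain ::
  "'a measure \<Rightarrow> (nat \<Rightarrow> real) \<Rightarrow> (nat \<Rightarrow> real) \<Rightarrow> nat \<Rightarrow> (nat \<Rightarrow> 'a \<Rightarrow> nat) \<Rightarrow> bool" where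
  "birth_death_chain M l r k X \<longleftrightarrow>
     prob_space M \<and>
     (\<forall>n. X n \<in> M \<rightarrow>\<^sub>M count_space UNIV) \<and>
     measure M {\<omega> \<in> space M. X 0 \<omega> = k} = 1 \<and>
     (\<forall>xs y. xs \<noteq> [] \<longrightarrow>
        measure M {\<omega> \<in> space M. (\<forall>i<length xs. X i \<omega> = xs ! i) \<and> X (length xs) \<omega> = y}
        = measure M {\<omega> \<in> space M. \<forall>i<length xs. X i \<omega> = xs ! i} * bd_trans l r (last xs) y)"

definition nat_filtration :: "'a measure \<Rightarrow> (nat \<Rightarrow> 'a \<Rightarrow> nat) \<Rightarrow> nat \<Rightarrow> 'a set set" where
  "nat_filtration M X n = sigma_sets (space M) {X i -` A \<inter> space M | i A. i \<le> n}"

definition is_stopping_time :: "'a measure \<Rightarrow> (nat \<Rightarrow> 'a \<Rightarrow> nat) \<Rightarrow> ('a \<Rightarrow> enat) \<Rightarrow> bool" where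
  "is_stopping_time M X T \<longleftrightarrow> (\<forall>n. {\<omega> \<in> space M. T \<omega> \<le> enat n} \<in> nat_filtration M X n)"

definition hitting_time_0 :: "(nat \<Rightarrow> 'a \<Rightarrow> nat) \<Rightarrow> 'a \<Rightarrow> enat" where
  "hitting_time_0 X \<omega> = (if \<exists>n. X n \<omega> = 0 then enat (LEAST n. X n \<omega> = 0) else \<infinity>)"

text \<open>Value of the process at a stopping time (arbitrary value 0 where T is infinite;
  this only happens on a null set in the theorem).\<close>
definition stopped_value :: "(nat \<Rightarrow> 'a \<Rightarrow> nat) \<Rightarrow> ('a \<Rightarrow> enat) \<Rightarrow> 'a \<Rightarrow> nat" where
  "stopped_value X T \<omega> = (case T \<omega> of enat n \<Rightarrow> X n \<omega> | \<infinity> \<Rightarrow> 0)"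

end

theory Submission
  imports Defs
begin

(*
  Let s x = (\<Sum>j<x. \<Prod>i=1..j. l i / r i) be the scale function of the chain. It is harmonic,
  so E s(X (min \<tau> n)) = s k for every stopping time \<tau>; if moreover E \<tau> < \<infinity>, the at most
  linear growth of s gives E s(X \<tau>) = s k by dominated convergence. The summability hypothesis
  makes the increments \<Prod>i=1..j. l i / r i converge to some c > 0, so that s x = c x + o(x).
  Since s is unbounded, a second-moment estimate for the exit times from (0, N) shows that the
  chain is absorbed at 0 almost surely. Hence P(X (T m) \<noteq> 0) \<rightarrow> 0, and E X (T m) \<rightarrow> s k / c > 0.
*)

lemma tendsto_of_deviation_bound:
  fixes a P :: "nat \<Rightarrow> real"
  assumes P: "P \<longlonglongrightarrow> 0" and dev: "\<And>\<epsilon>. \<epsilon> > 0 \<Longrightarrow> \<exists>K. \<forall>m. \<bar>a m - s\<bar> \<le> \<epsilon> + K * P m"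
  shows "a \<longlonglongrightarrow> s"
proof (rule LIMSEQ_I)
  fix e :: real assume "e > 0"
  then obtain K where K: "\<And>m. \<bar>a m - s\<bar> \<le> e / 2 + K * P m"
    using dev[of "e / 2"] by auto
  have "(\<lambda>m. K * P m) \<longlonglongrightarrow> 0"
    using tendsto_mult_right_zero[OF P] by simp
  then obtain m0 where m0: "\<And>m. m \<ge> m0 \<Longrightarrow> \<bar>K * P m\<bar> < e / 2"
    using LIMSEQ_D[of "\<lambda>m. K * P m" 0 "e / 2"] \<open>e > 0\<close> by auto
  have "\<bar>a m - s\<bar> < e" if "m \<ge> m0" for m
    using K[of m] m0[OF that] by linarith
  then show "\<exists>m0. \<forall>m\<ge>m0. norm (a m - s) < e" by auto
qed

lemma (in finite_measure) integrable_bounded_nat_valued: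
  fixes h :: "'a \<Rightarrow> nat" and \<phi> :: "nat \<Rightarrow> real"
  assumes h: "h \<in> M \<rightarrow>\<^sub>M count_space UNIV" and bound: "AE \<omega> in M. h \<omega> \<le> K"
  shows "integrable M (\<lambda>\<omega>. \<phi> (h \<omega>))"
proof (rule integrable_const_bound[where B="\<Sum>x\<le>K. \<bar>\<phi> x\<bar>"])
  show "AE \<omega> in M. norm (\<phi> (h \<omega>)) \<le> (\<Sum>x\<le>K. \<bar>\<phi> x\<bar>)"
    using bound by eventually_elim (auto intro: member_le_sum[where f="\<lambda>x. \<bar>\<phi> x\<bar>"])
  show "(\<lambda>\<omega>. \<phi> (h \<omega>)) \<in> borel_measurable M"
    using measurable_compose[OF h, of \<phi>] by simp
qed

lemma (in finite_measure) integral_indicator_finite_range: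
  fixes h :: "'a \<Rightarrow> 'b::countable" and \<psi> :: "'b \<Rightarrow> real"
  assumes S: "finite S" and range: "AE \<omega> in M. h \<omega> \<in> S"
    and A: "A \<in> sets M" and h: "h \<in> M \<rightarrow>\<^sub>M count_space UNIV"
  shows "(\<integral>\<omega>. indicator A \<omega> * \<psi> (h \<omega>) \<partial>M) = (\<Sum>s\<in>S. \<psi> s * measure M (A \<inter> {\<omega>\<in>space M. h \<omega> = s}))"
proof -
  have level[measurable]: "A \<inter> {\<omega>\<in>space M. h \<omega> = s} \<in> sets M" for s
  proof -
    have "{\<omega>\<in>space M. h \<omega> = s} \<in> sets M"
      using measurable_sets[OF h, of "{s}"] by (simp add: vimage_def Int_def conj_commute)
    then show ?thesis using A by blast
  qed
  have "(\<integral>\<omega>. indicator A \<omega> * \<psi> (h \<omega>) \<partial>M)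
      = (\<integral>\<omega>. (\<Sum>s\<in>S. \<psi> s * indicator (A \<inter> {\<omega>\<in>space M. h \<omega> = s}) \<omega>) \<partial>M)"
  proof (rule integral_cong_AE)
    show "(\<lambda>\<omega>. indicator A \<omega> * \<psi> (h \<omega>)) \<in> borel_measurable M"
      using A measurable_compose[OF h, of \<psi>] by measurable
    show "AE \<omega> in M. indicator A \<omega> * \<psi> (h \<omega>)
        = (\<Sum>s\<in>S. \<psi> s * indicator (A \<inter> {\<omega>\<in>space M. h \<omega> = s}) \<omega>)"
      using range AE_space
    proof eventually_elim
      case (elim \<omega>)
      then have "(\<Sum>s\<in>S. \<psi> s * indicator (A \<inter> {\<omega>\<in>space M. h \<omega> = s}) \<omega>)
          = (\<Sum>s\<in>S. if s = h \<omega> then \<psi> s * indicator A \<omega> else 0)"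
        by (intro sum.cong) (auto simp: indicator_def)
      then show ?case using elim S by (simp add: mult.commute)
    qed
  qed measurable
  also have "\<dots> = (\<Sum>s\<in>S. \<psi> s * measure M (A \<inter> {\<omega>\<in>space M. h \<omega> = s}))"
    by (subst Bochner_Integration.integral_sum) (auto intro!: integrable_real_indicator simp: less_top[symmetric])
  finally show ?thesis .
qed

lemma measurable_enat_level_sets:
  fixes \<tau> :: "'a \<Rightarrow> enat"
  assumes "\<And>n. {\<omega>\<in>space M. \<tau> \<omega> \<le> enat n} \<in> sets M"
  shows "\<tau> \<in> M \<rightarrow>\<^sub>M count_space UNIV"
  unfolding measurable_count_space_eq2_countable
proof (intro conjI ballI)
  fix a :: enat
  show "\<tau> -` {a} \<inter> space M \<in> sets M"
  proof (cases a)
    case (enat t)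
    have eq: "\<tau> \<omega> = enat t \<longleftrightarrow> \<tau> \<omega> \<le> enat t \<and> (\<forall>s<t. \<not> \<tau> \<omega> \<le> enat s)" for \<omega>
      by (cases "\<tau> \<omega>") (auto simp: not_le intro: le_neq_implies_less)
    have "\<tau> -` {a} \<inter> space M
        = {\<omega>\<in>space M. \<tau> \<omega> \<le> enat t} - (\<Union>s<t. {\<omega>\<in>space M. \<tau> \<omega> \<le> enat s})"
      using enat eq by blast
    then show ?thesis using assms by auto
  next
    case infinity
    have eq: "\<tau> \<omega> = \<infinity> \<longleftrightarrow> (\<forall>n. \<not> \<tau> \<omega> \<le> enat n)" for \<omega>
      by (cases "\<tau> \<omega>") auto
    have "\<tau> -` {a} \<inter> space M = space M - (\<Union>n. {\<omega>\<in>space M. \<tau> \<omega> \<le> enat n})"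
      using infinity eq by blast
    then show ?thesis using assms by auto
  qed
qed simp

lemma AE_finite_of_nn_integral_enat:
  fixes \<tau> :: "'a \<Rightarrow> enat"
  assumes "\<tau> \<in> M \<rightarrow>\<^sub>M count_space UNIV" and "(\<integral>\<^sup>+\<omega>. ennreal_of_enat (\<tau> \<omega>) \<partial>M) < \<infinity>"
  shows "AE \<omega> in M. \<tau> \<omega> \<noteq> \<infinity>"
proof -
  have "AE \<omega> in M. ennreal_of_enat (\<tau> \<omega>) \<noteq> \<infinity>"
    using assms measurable_compose[OF assms(1), of ennreal_of_enat borel]
    by (intro nn_integral_PInf_AE) auto
  then show ?thesis
  proof eventually_elim
    case (elim \<omega>)
    then show ?case by (cases "\<tau> \<omega>") auto
  qed
qed

lemma integrable_finite_part_enat: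
  fixes \<tau> :: "'a \<Rightarrow> enat"
  assumes \<tau>: "\<tau> \<in> M \<rightarrow>\<^sub>M count_space UNIV" and fin: "(\<integral>\<^sup>+\<omega>. ennreal_of_enat (\<tau> \<omega>) \<partial>M) < \<infinity>"
  shows "integrable M (\<lambda>\<omega>. case \<tau> \<omega> of enat t \<Rightarrow> real t | \<infinity> \<Rightarrow> 0)"
proof (rule integrableI_bounded)
  show "(\<lambda>\<omega>. case \<tau> \<omega> of enat t \<Rightarrow> real t | \<infinity> \<Rightarrow> 0) \<in> borel_measurable M"
    using measurable_compose[OF \<tau>, of "\<lambda>t. case t of enat t \<Rightarrow> real t | \<infinity> \<Rightarrow> 0" borel] by simp
  have "(\<integral>\<^sup>+\<omega>. ennreal (norm (case \<tau> \<omega> of enat t \<Rightarrow> real t | \<infinity> \<Rightarrow> 0)) \<partial>M)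
      \<le> (\<integral>\<^sup>+\<omega>. ennreal_of_enat (\<tau> \<omega>) \<partial>M)"
    by (intro nn_integral_mono) (auto simp: ennreal_of_nat_eq_real_of_nat split: enat.splits)
  then show "(\<integral>\<^sup>+\<omega>. ennreal (norm (case \<tau> \<omega> of enat t \<Rightarrow> real t | \<infinity> \<Rightarrow> 0)) \<partial>M) < \<infinity>"
    using fin by (rule le_less_trans)
qed

definition min_time :: "('a \<Rightarrow> enat) \<Rightarrow> nat \<Rightarrow> 'a \<Rightarrow> nat" where
  "min_time \<tau> n \<omega> = the_enat (min (\<tau> \<omega>) (enat n))"

lemma min_time_eq_bound: "enat n \<le> \<tau> \<omega> \<Longrightarrow> min_time \<tau> n \<omega> = n"
  by (simp add: min_time_def min_def)

lemma min_time_eq_time: "\<tau> \<omega> = enat t \<Longrightarrow> t \<le> n \<Longrightarrow> min_time \<tau> n \<omega> = t"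
  by (simp add: min_time_def)

lemma min_time_le_bound: "min_time \<tau> n \<omega> \<le> n"
  by (cases "\<tau> \<omega>") (auto simp: min_time_def min_def)

lemma min_time_le_time: "\<tau> \<omega> = enat t \<Longrightarrow> min_time \<tau> n \<omega> \<le> t"
  by (simp add: min_time_def min_def)

lemma min_time_Suc:
  "min_time \<tau> (Suc n) \<omega> = (if enat n < \<tau> \<omega> then Suc n else min_time \<tau> n \<omega>)"
  by (cases "\<tau> \<omega>") (auto simp: min_time_def min_def Suc_ile_eq)

lemma measurable_min_time:
  "\<tau> \<in> M \<rightarrow>\<^sub>M count_space UNIV \<Longrightarrow> min_time \<tau> n \<in> M \<rightarrow>\<^sub>M count_space UNIV"
  using measurable_compose[of \<tau> M _ "\<lambda>t. the_enat (min t (enat n))" "count_space UNIV"]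
  by (simp add: min_time_def[abs_def])

lemma is_stopping_time_iff_less:
  "is_stopping_time M X \<tau> \<longleftrightarrow> (\<forall>n. {\<omega>\<in>space M. enat n < \<tau> \<omega>} \<in> nat_filtration M X n)"
proof -
  have compl: "space M - A \<in> nat_filtration M X n" if "A \<in> nat_filtration M X n" for A n
    using that unfolding nat_filtration_def by (rule sigma_sets.Compl)
  have less: "{\<omega>\<in>space M. enat n < \<tau> \<omega>} = space M - {\<omega>\<in>space M. \<tau> \<omega> \<le> enat n}" for n
    by auto
  have le: "{\<omega>\<in>space M. \<tau> \<omega> \<le> enat n} = space M - {\<omega>\<in>space M. enat n < \<tau> \<omega>}" for n
    by auto
  show ?thesis
    unfolding is_stopping_time_def
  proof (intro iffI allI)
    fix n assume "\<forall>n. {\<omega>\<in>space M. \<tau> \<omega> \<le> enat n} \<in> nat_filtration M X n"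
    then show "{\<omega>\<in>space M. enat n < \<tau> \<omega>} \<in> nat_filtration M X n"
      unfolding less using compl by blast
  next
    fix n assume "\<forall>n. {\<omega>\<in>space M. enat n < \<tau> \<omega>} \<in> nat_filtration M X n"
    then show "{\<omega>\<in>space M. \<tau> \<omega> \<le> enat n} \<in> nat_filtration M X n"
      unfolding le using compl by blast
  qed
qed

locale birth_death =
  fixes M :: "'a measure" and l r :: "nat \<Rightarrow> real" and k :: nat and X :: "nat \<Rightarrow> 'a \<Rightarrow> nat"
  assumes l_pos: "\<And>n. n \<ge> 1 \<Longrightarrow> l n > 0"
    and r_pos: "\<And>n. n \<ge> 1 \<Longrightarrow> r n > 0"
    and l_plus_r: "\<And>n. n \<ge> 1 \<Longrightarrow> l n + r n = 1"
    and chain: "birth_death_chain M l r k X"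
begin

sublocale prob_space M
  using chain by (simp add: birth_death_chain_def)

lemma measurable_X[measurable]: "X n \<in> M \<rightarrow>\<^sub>M count_space UNIV"
  using chain by (simp add: birth_death_chain_def)

lemma cylinder_transition:
  "xs \<noteq> [] \<Longrightarrow> measure M {\<omega>\<in>space M. (\<forall>i<length xs. X i \<omega> = xs ! i) \<and> X (length xs) \<omega> = y}
     = measure M {\<omega>\<in>space M. \<forall>i<length xs. X i \<omega> = xs ! i} * bd_trans l r (last xs) y"
  using chain by (simp add: birth_death_chain_def)

lemma bd_trans_nonneg: "bd_trans l r x y \<ge> 0"
  using l_pos[of x] r_pos[of x] by (auto simp: bd_trans_def)

definition history :: "nat \<Rightarrow> 'a \<Rightarrow> nat list" where
  "history j \<omega> = map (\<lambda>i. X i \<omega>) [0..<Suc j]"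

lemma length_history[simp]: "length (history j \<omega>) = Suc j"
  by (simp add: history_def)

lemma last_history[simp]: "last (history j \<omega>) = X j \<omega>"
  by (simp add: history_def)

lemma history_eq_iff:
  "length xs = Suc j \<Longrightarrow> history j \<omega> = xs \<longleftrightarrow> (\<forall>i<length xs. X i \<omega> = xs ! i)"
  unfolding history_def by (auto simp: list_eq_iff_nth_eq simp del: upt_Suc)

lemma history_eq_wrong_length: "length xs \<noteq> Suc j \<Longrightarrow> {\<omega>\<in>space M. history j \<omega> = xs} = {}"
  by auto

lemma sets_history_eq: "{\<omega>\<in>space M. history j \<omega> = xs} \<in> sets M"
proof (cases "length xs = Suc j")
  case True
  then show ?thesis by (simp add: history_eq_iff)
next
  case False
  then show ?thesis by (simp add: history_eq_wrong_length)
qed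

lemma emeasure_history_preimage:
  assumes "E \<in> sets M"
  shows "emeasure M ({\<omega>\<in>space M. history j \<omega> \<in> B} \<inter> E)
       = (\<integral>\<^sup>+xs. emeasure M ({\<omega>\<in>space M. history j \<omega> = xs} \<inter> E) \<partial>count_space B)"
proof -
  have "{\<omega>\<in>space M. history j \<omega> \<in> B} \<inter> E = (\<Union>xs\<in>B. {\<omega>\<in>space M. history j \<omega> = xs} \<inter> E)"
    by auto
  also have "emeasure M \<dots> = (\<integral>\<^sup>+xs. emeasure M ({\<omega>\<in>space M. history j \<omega> = xs} \<inter> E) \<partial>count_space B)"
    using assms sets_history_eq
    by (intro emeasure_UN_countable) (auto simp: disjoint_family_on_def)
  finally show ?thesis .
qed

lemma measure_history_transition:
  "measure M ({\<omega>\<in>space M. history j \<omega> = xs} \<inter> {\<omega>\<in>space M. X (Suc j) \<omega> = y})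
     = measure M {\<omega>\<in>space M. history j \<omega> = xs} * bd_trans l r (last xs) y"
proof (cases "length xs = Suc j")
  case True
  then have "{\<omega>\<in>space M. history j \<omega> = xs} \<inter> {\<omega>\<in>space M. X (Suc j) \<omega> = y}
      = {\<omega>\<in>space M. (\<forall>i<length xs. X i \<omega> = xs ! i) \<and> X (length xs) \<omega> = y}"
    by (auto simp: history_eq_iff)
  moreover have "xs \<noteq> []" using True by auto
  ultimately show ?thesis
    using cylinder_transition[of xs y] True by (simp add: history_eq_iff)
next
  case False
  then show ?thesis by (simp add: history_eq_wrong_length)
qed

lemma nat_filtration_history_preimage:
  "A \<in> nat_filtration M X j \<Longrightarrow> \<exists>B. A = {\<omega>\<in>space M. history j \<omega> \<in> B}"
  unfolding nat_filtration_def
proof (induction rule: sigma_sets.induct)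
  case (Basic a)
  then obtain i C where a: "a = X i -` C \<inter> space M" "i \<le> j" by auto
  then have "history j \<omega> ! i = X i \<omega>" for \<omega>
    unfolding history_def by (subst nth_map) (auto simp del: upt_Suc)
  then show ?case by (intro exI[of _ "{xs. xs ! i \<in> C}"]) (auto simp: a)
next
  case Empty
  then show ?case by (intro exI[of _ "{}"]) auto
next
  case (Compl a)
  then obtain B where "a = {\<omega>\<in>space M. history j \<omega> \<in> B}" by auto
  then show ?case by (intro exI[of _ "- B"]) auto
next
  case (Union a)
  then obtain B where "\<And>i. a i = {\<omega>\<in>space M. history j \<omega> \<in> B i}" by metis
  then show ?case by (intro exI[of _ "\<Union>(range B)"]) auto
qed

lemma sigma_algebra_nat_filtration: "sigma_algebra (space M) (nat_filtration M X n)"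
  unfolding nat_filtration_def by (rule sigma_algebra_sigma_sets) auto

lemma sets_nat_filtration:
  assumes "A \<in> nat_filtration M X j"
  shows "A \<in> sets M"
proof -
  have "{X i -` C \<inter> space M | i C. i \<le> j} \<subseteq> sets M"
    by (auto intro: measurable_sets[OF measurable_X])
  then show ?thesis
    using assms sets.sigma_sets_subset unfolding nat_filtration_def by blast
qed

lemma preimage_in_nat_filtration: "i \<le> j \<Longrightarrow> X i -` C \<inter> space M \<in> nat_filtration M X j"
  unfolding nat_filtration_def by (rule sigma_sets.Basic) auto

lemma markov_property:
  assumes "A \<in> nat_filtration M X j"
  shows "measure M (A \<inter> {\<omega>\<in>space M. X j \<omega> = x \<and> X (Suc j) \<omega> = y})
       = measure M (A \<inter> {\<omega>\<in>space M. X j \<omega> = x}) * bd_trans l r x y"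
proof -
  obtain B where "A = {\<omega>\<in>space M. history j \<omega> \<in> B}"
    using nat_filtration_history_preimage[OF assms] by blast
  then have A: "A \<inter> {\<omega>\<in>space M. X j \<omega> = x} = {\<omega>\<in>space M. history j \<omega> \<in> {xs\<in>B. last xs = x}}"
    by auto
  define H where "H xs = {\<omega>\<in>space M. history j \<omega> = xs}" for xs
  have A_space: "{\<omega>\<in>space M. history j \<omega> \<in> {xs\<in>B. last xs = x}} \<inter> space M = A \<inter> {\<omega>\<in>space M. X j \<omega> = x}"
    by (auto simp: A)
  have "ennreal (measure M (A \<inter> {\<omega>\<in>space M. X j \<omega> = x \<and> X (Suc j) \<omega> = y}))
      = emeasure M ((A \<inter> {\<omega>\<in>space M. X j \<omega> = x}) \<inter> {\<omega>\<in>space M. X (Suc j) \<omega> = y})"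
    by (simp add: emeasure_eq_measure Int_def conj_ac)
  also have "\<dots> = (\<integral>\<^sup>+xs. emeasure M (H xs \<inter> {\<omega>\<in>space M. X (Suc j) \<omega> = y}) \<partial>count_space {xs\<in>B. last xs = x})"
    unfolding A H_def by (rule emeasure_history_preimage) measurable
  also have "\<dots> = (\<integral>\<^sup>+xs. emeasure M (H xs \<inter> space M) * ennreal (bd_trans l r x y) \<partial>count_space {xs\<in>B. last xs = x})"
    by (intro nn_integral_cong)
      (simp add: H_def emeasure_eq_measure measure_history_transition bd_trans_nonneg
         ennreal_mult[symmetric] Int_absorb2 sets.sets_into_space sets_history_eq)
  also have "\<dots> = emeasure M ({\<omega>\<in>space M. history j \<omega> \<in> {xs\<in>B. last xs = x}} \<inter> space M) * ennreal (bd_trans l r x y)"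
    unfolding H_def by (subst emeasure_history_preimage[OF sets.top]) (simp add: nn_integral_multc)
  also note A_space
  finally show ?thesis
    by (simp add: emeasure_eq_measure bd_trans_nonneg ennreal_mult[symmetric])
qed

definition admissible :: "'a \<Rightarrow> bool" where
  "admissible \<omega> \<longleftrightarrow> X 0 \<omega> = k \<and> (\<forall>j. bd_trans l r (X j \<omega>) (X (Suc j) \<omega>) \<noteq> 0)"

lemma AE_admissible: "AE \<omega> in M. admissible \<omega>"
proof -
  have "AE \<omega> in M. X 0 \<omega> = k"
    using chain AE_prob_1[of "{\<omega>\<in>space M. X 0 \<omega> = k}"] by (auto simp: birth_death_chain_def)
  moreover have null: "AE \<omega> in M. X j \<omega> = x \<longrightarrow> X (Suc j) \<omega> \<noteq> y" if "bd_trans l r x y = 0" for j x y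
  proof (rule AE_I')
    have "measure M (space M \<inter> {\<omega>\<in>space M. X j \<omega> = x \<and> X (Suc j) \<omega> = y}) = 0"
      using markov_property[of "space M" j x y] that by (simp add: nat_filtration_def sigma_sets_top)
    then show "{\<omega>\<in>space M. X j \<omega> = x \<and> X (Suc j) \<omega> = y} \<in> null_sets M"
      by (intro null_setsI) (auto simp: emeasure_eq_measure)
  qed auto
  then have "AE \<omega> in M. \<forall>j x y. bd_trans l r x y = 0 \<longrightarrow> X j \<omega> = x \<longrightarrow> X (Suc j) \<omega> \<noteq> y"
    by (intro AE_all_countable[THEN iffD2] allI AE_impI)
  ultimately show ?thesis
    by eventually_elim (auto simp: admissible_def)
qed

lemma admissible_start: "admissible \<omega> \<Longrightarrow> X 0 \<omega> = k"
  by (simp add: admissible_def)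

lemma admissible_step:
  assumes "admissible \<omega>"
  shows "X j \<omega> = 0 \<Longrightarrow> X (Suc j) \<omega> = 0"
    and "X j \<omega> \<noteq> 0 \<Longrightarrow> X (Suc j) \<omega> = Suc (X j \<omega>) \<or> Suc (X (Suc j) \<omega>) = X j \<omega>"
  using assms unfolding admissible_def bd_trans_def by (auto split: if_splits)

lemma admissible_X_le: "admissible \<omega> \<Longrightarrow> X j \<omega> \<le> k + j"
proof (induction j)
  case (Suc j)
  then show ?case using admissible_step[OF Suc.prems, of j] by (cases "X j \<omega> = 0") auto
qed (simp add: admissible_start)

lemma admissible_absorbed: "admissible \<omega> \<Longrightarrow> X i \<omega> = 0 \<Longrightarrow> i \<le> j \<Longrightarrow> X j \<omega> = 0"
proof (induction j)
  case (Suc j)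
  then show ?case using admissible_step(1)[OF Suc.prems(1), of j] by (cases "i = Suc j") auto
qed simp

lemma admissible_X_Suc_le: "admissible \<omega> \<Longrightarrow> X (Suc j) \<omega> \<le> Suc (X j \<omega>)"
  using admissible_step[of \<omega> j] by (cases "X j \<omega> = 0") auto

lemma AE_X_le: "AE \<omega> in M. X j \<omega> \<le> k + j"
  using AE_admissible by eventually_elim (rule admissible_X_le)

lemma measurable_X_at:
  "h \<in> M \<rightarrow>\<^sub>M count_space UNIV \<Longrightarrow> (\<lambda>\<omega>. X (h \<omega>) \<omega>) \<in> M \<rightarrow>\<^sub>M count_space UNIV"
  by (rule measurable_compose_countable'[where I=UNIV]) auto

lemma integrable_X_at:
  fixes \<phi> :: "nat \<Rightarrow> real"
  assumes "h \<in> M \<rightarrow>\<^sub>M count_space UNIV" and "\<And>\<omega>. h \<omega> \<le> n"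
  shows "integrable M (\<lambda>\<omega>. \<phi> (X (h \<omega>) \<omega>))"
proof (rule integrable_bounded_nat_valued[OF measurable_X_at[OF assms(1)]])
  show "AE \<omega> in M. X (h \<omega>) \<omega> \<le> k + n"
    using AE_admissible by eventually_elim (meson add_left_mono admissible_X_le assms(2) order_trans)
qed

lemma integrable_indicator_X:
  fixes \<phi> :: "nat \<Rightarrow> real"
  shows "A \<in> sets M \<Longrightarrow> integrable M (\<lambda>\<omega>. indicator A \<omega> * \<phi> (X j \<omega>))"
  using integrable_real_mult_indicator[OF _ integrable_bounded_nat_valued[OF measurable_X AE_X_le]]
  by (simp add: mult.commute)

definition transition_op :: "(nat \<Rightarrow> real) \<Rightarrow> nat \<Rightarrow> real" where
  "transition_op \<phi> x = (if x = 0 then \<phi> 0 else r x * \<phi> (Suc x) + l x * \<phi> (x - 1))"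

lemma sum_bd_trans_eq_transition_op:
  assumes "x < N"
  shows "(\<Sum>y\<le>N. \<phi> y * bd_trans l r x y) = transition_op \<phi> x"
proof (cases "x = 0")
  case True
  then have "(\<Sum>y\<le>N. \<phi> y * bd_trans l r x y) = (\<Sum>y\<le>N. if y = 0 then \<phi> y else 0)"
    by (intro sum.cong) (auto simp: bd_trans_def)
  then show ?thesis by (simp add: transition_op_def True)
next
  case False
  then have "(\<Sum>y\<le>N. \<phi> y * bd_trans l r x y) =
      (\<Sum>y\<le>N. (if y = Suc x then \<phi> y * r x else 0) + (if y = x - 1 then \<phi> y * l x else 0))"
    by (intro sum.cong) (auto simp: bd_trans_def)
  also have "\<dots> = r x * \<phi> (Suc x) + l x * \<phi> (x - 1)"
    using assms by (simp add: sum.distrib)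
  finally show ?thesis by (simp add: transition_op_def False)
qed

lemma integral_indicator_X_Suc:
  assumes A: "A \<in> nat_filtration M X j"
  shows "(\<integral>\<omega>. indicator A \<omega> * \<phi> (X (Suc j) \<omega>) \<partial>M)
       = (\<integral>\<omega>. indicator A \<omega> * transition_op \<phi> (X j \<omega>) \<partial>M)"
proof -
  define N where "N = k + j"
  have [measurable]: "A \<in> sets M" by (rule sets_nat_filtration[OF A])
  have range: "AE \<omega> in M. (X j \<omega>, X (Suc j) \<omega>) \<in> {..N} \<times> {..Suc N}"
    using AE_X_le[of j] AE_X_le[of "Suc j"] by eventually_elim (simp add: N_def)
  have pair: "(\<lambda>\<omega>. (X j \<omega>, X (Suc j) \<omega>)) \<in> M \<rightarrow>\<^sub>M count_space UNIV"
    unfolding measurable_count_space_eq2_countable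
  proof (intro conjI ballI)
    fix p :: "nat \<times> nat"
    have "(\<lambda>\<omega>. (X j \<omega>, X (Suc j) \<omega>)) -` {p} \<inter> space M = {\<omega>\<in>space M. X j \<omega> = fst p \<and> X (Suc j) \<omega> = snd p}"
      by auto
    then show "(\<lambda>\<omega>. (X j \<omega>, X (Suc j) \<omega>)) -` {p} \<inter> space M \<in> sets M"
      by simp
  qed simp
  have "(\<integral>\<omega>. indicator A \<omega> * \<phi> (X (Suc j) \<omega>) \<partial>M)
      = (\<Sum>(x, y)\<in>{..N} \<times> {..Suc N}. \<phi> y * measure M (A \<inter> {\<omega>\<in>space M. X j \<omega> = x \<and> X (Suc j) \<omega> = y}))"
    using integral_indicator_finite_range[OF _ range _ pair, of A "\<lambda>(x, y). \<phi> y"]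
    by (simp add: case_prod_beta prod_eq_iff)
  also have "\<dots> = (\<Sum>x\<le>N. measure M (A \<inter> {\<omega>\<in>space M. X j \<omega> = x}) * (\<Sum>y\<le>Suc N. \<phi> y * bd_trans l r x y))"
    by (simp add: sum.cartesian_product[symmetric] markov_property[OF A] sum_distrib_left sum_distrib_right mult_ac
        del: sum.atMost_Suc)
  also have "\<dots> = (\<Sum>x\<le>N. transition_op \<phi> x * measure M (A \<inter> {\<omega>\<in>space M. X j \<omega> = x}))"
    by (simp add: sum_bd_trans_eq_transition_op mult.commute del: sum.atMost_Suc)
  also have "\<dots> = (\<integral>\<omega>. indicator A \<omega> * transition_op \<phi> (X j \<omega>) \<partial>M)"
    using integral_indicator_finite_range[of "{..N}" "X j" A "transition_op \<phi>"] AE_X_le[of j]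
    by (simp add: N_def)
  finally show ?thesis .
qed

lemma measurable_stopping_time:
  "is_stopping_time M X \<tau> \<Longrightarrow> \<tau> \<in> M \<rightarrow>\<^sub>M count_space UNIV"
  unfolding is_stopping_time_def by (intro measurable_enat_level_sets) (auto intro: sets_nat_filtration)

lemma integral_X_min_time_Suc:
  fixes n :: nat
  assumes \<tau>: "is_stopping_time M X \<tau>"
  defines "A \<equiv> {\<omega>\<in>space M. enat n < \<tau> \<omega>}"
  shows "(\<integral>\<omega>. \<phi> (X (min_time \<tau> (Suc n) \<omega>) \<omega>) \<partial>M) = (\<integral>\<omega>. \<phi> (X (min_time \<tau> n \<omega>) \<omega>) \<partial>M)
    + (\<integral>\<omega>. indicator A \<omega> * (transition_op \<phi> (X n \<omega>) - \<phi> (X n \<omega>)) \<partial>M)"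
proof -
  have A_filt: "A \<in> nat_filtration M X n"
    using \<tau> by (simp add: A_def is_stopping_time_iff_less)
  then have [measurable]: "A \<in> sets M" by (rule sets_nat_filtration)
  have step: "\<phi> (X (min_time \<tau> (Suc n) \<omega>) \<omega>)
      = \<phi> (X (min_time \<tau> n \<omega>) \<omega>) + indicator A \<omega> * (\<phi> (X (Suc n) \<omega>) - \<phi> (X n \<omega>))"
    if "\<omega> \<in> space M" for \<omega>
  proof (cases "enat n < \<tau> \<omega>")
    case True
    then have "min_time \<tau> (Suc n) \<omega> = Suc n" "min_time \<tau> n \<omega> = n"
      by (simp_all add: min_time_Suc min_time_eq_bound)
    moreover have "\<omega> \<in> A" using True that unfolding A_def by blast
    ultimately show ?thesis by simp
  next
    case False
    then have "min_time \<tau> (Suc n) \<omega> = min_time \<tau> n \<omega>" by (simp add: min_time_Suc)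
    moreover have "\<omega> \<notin> A" using False unfolding A_def by blast
    ultimately show ?thesis by simp
  qed
  have "(\<integral>\<omega>. \<phi> (X (min_time \<tau> (Suc n) \<omega>) \<omega>) \<partial>M)
      = (\<integral>\<omega>. \<phi> (X (min_time \<tau> n \<omega>) \<omega>) + indicator A \<omega> * (\<phi> (X (Suc n) \<omega>) - \<phi> (X n \<omega>)) \<partial>M)"
    by (rule Bochner_Integration.integral_cong[OF refl step])
  also have "\<dots> = (\<integral>\<omega>. \<phi> (X (min_time \<tau> n \<omega>) \<omega>) \<partial>M)
      + ((\<integral>\<omega>. indicator A \<omega> * \<phi> (X (Suc n) \<omega>) \<partial>M) - (\<integral>\<omega>. indicator A \<omega> * \<phi> (X n \<omega>) \<partial>M))"
    using integrable_X_at[OF measurable_min_time[OF measurable_stopping_time[OF \<tau>]] min_time_le_bound]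
    by (simp add: right_diff_distrib integrable_indicator_X)
  also have "(\<integral>\<omega>. indicator A \<omega> * \<phi> (X (Suc n) \<omega>) \<partial>M) - (\<integral>\<omega>. indicator A \<omega> * \<phi> (X n \<omega>) \<partial>M)
      = (\<integral>\<omega>. indicator A \<omega> * (transition_op \<phi> (X n \<omega>) - \<phi> (X n \<omega>)) \<partial>M)"
    unfolding integral_indicator_X_Suc[OF A_filt] right_diff_distrib
    by (intro Bochner_Integration.integral_diff[symmetric] integrable_indicator_X) simp_all
  finally show ?thesis .
qed

lemma dynkin_formula:
  assumes \<tau>: "is_stopping_time M X \<tau>"
  shows "(\<integral>\<omega>. \<phi> (X (min_time \<tau> n \<omega>) \<omega>) \<partial>M) = \<phi> k +
    (\<Sum>j<n. \<integral>\<omega>. indicator {\<omega>\<in>space M. enat j < \<tau> \<omega>} \<omega> * (transition_op \<phi> (X j \<omega>) - \<phi> (X j \<omega>)) \<partial>M)"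
proof (induction n)
  case 0
  have "(\<integral>\<omega>. \<phi> (X (min_time \<tau> 0 \<omega>) \<omega>) \<partial>M) = (\<integral>\<omega>. \<phi> k \<partial>M)"
    using AE_admissible min_time_le_bound[of \<tau> 0]
    by (intro integral_cong_AE integrable_X_at[OF measurable_min_time[OF measurable_stopping_time[OF \<tau>]]])
      (auto elim!: eventually_mono simp: admissible_start)
  then show ?case by (simp add: prob_space)
next
  case (Suc n)
  then show ?case using integral_X_min_time_Suc[OF \<tau>, of \<phi> n] by simp
qed

section \<open>The scale function\<close>

definition scale_incr :: "nat \<Rightarrow> real" where
  "scale_incr n = (\<Prod>i<n. l (Suc i) / r (Suc i))"

definition scale :: "nat \<Rightarrow> real" where
  "scale x = (\<Sum>j<x. scale_incr j)"

lemma scale_incr_pos: "scale_incr n > 0"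
  unfolding scale_incr_def by (intro prod_pos) (auto intro!: divide_pos_pos l_pos r_pos)

lemma scale_0[simp]: "scale 0 = 0"
  by (simp add: scale_def)

lemma scale_Suc: "scale (Suc x) = scale x + scale_incr x"
  by (simp add: scale_def)

lemma scale_mono: "x \<le> y \<Longrightarrow> scale x \<le> scale y"
  unfolding scale_def by (rule sum_mono2) (auto intro: less_imp_le[OF scale_incr_pos])

lemma scale_nonneg: "scale x \<ge> 0"
  using scale_mono[of 0 x] by simp

lemma scale_pos: "x \<ge> 1 \<Longrightarrow> scale x > 0"
  using scale_mono[of 1 x] scale_incr_pos[of 0] by (simp add: scale_def)

lemma scale_ge_linear:
  assumes "\<And>n. c \<le> scale_incr n"
  shows "c * real x \<le> scale x"
proof (induction x)
  case (Suc x)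
  then show ?case
    unfolding scale_Suc of_nat_Suc distrib_left mult_1_right using assms[of x] by linarith
qed simp

lemma scale_le_linear:
  assumes "\<And>n. scale_incr n \<le> C"
  shows "scale x \<le> C * real x"
proof (induction x)
  case (Suc x)
  then show ?case
    unfolding scale_Suc of_nat_Suc distrib_left mult_1_right using assms[of x] by linarith
qed simp

lemma scale_X_min_time_le:
  assumes C: "\<And>n. scale_incr n \<le> C" and "admissible \<omega>" and "\<tau> \<omega> = enat t"
  shows "scale (X (min_time \<tau> n \<omega>) \<omega>) \<le> C * (k + real t)"
proof -
  have "X (min_time \<tau> n \<omega>) \<omega> \<le> k + t"
    using admissible_X_le[OF assms(2)] min_time_le_time[of \<tau> \<omega> t n, OF assms(3)]
    by (meson add_left_mono order_trans)
  moreover have "C \<ge> 0" using C[of 0] scale_incr_pos[of 0] by linarith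
  ultimately have "C * X (min_time \<tau> n \<omega>) \<omega> \<le> C * (k + real t)"
    by (intro mult_left_mono) auto
  then show ?thesis
    using scale_le_linear[OF C, of "X (min_time \<tau> n \<omega>) \<omega>"] by linarith
qed

lemma r_scale_incr_Suc: "r (Suc y) * scale_incr (Suc y) = l (Suc y) * scale_incr y"
  using r_pos[of "Suc y"] by (simp add: scale_incr_def field_simps)

lemma transition_op_scale: "transition_op scale x = scale x"
proof (cases x)
  case (Suc y)
  have "transition_op scale x = (l (Suc y) + r (Suc y)) * (scale y + scale_incr y)"
    using r_scale_incr_Suc[of y] by (simp add: transition_op_def Suc scale_Suc distrib_left distrib_right)
  then show ?thesis using l_plus_r[of "Suc y"] by (simp add: Suc scale_Suc)
qed (simp add: transition_op_def)

lemma transition_op_scale_sq: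
  "transition_op (\<lambda>x. (scale x)\<^sup>2) (Suc y) - (scale (Suc y))\<^sup>2
     = r (Suc y) * (scale_incr (Suc y))\<^sup>2 + l (Suc y) * (scale_incr y)\<^sup>2"
proof -
  define s a b R L where "s = scale (Suc y)" "a = scale_incr (Suc y)" "b = scale_incr y"
    "R = r (Suc y)" "L = l (Suc y)"
  have "R + L = 1" "R * a = L * b"
    using l_plus_r[of "Suc y"] r_scale_incr_Suc[of y] by (simp_all add: s_a_b_R_L_def)
  moreover have "transition_op (\<lambda>x. (scale x)\<^sup>2) (Suc y) = R * (s + a)\<^sup>2 + L * (s - b)\<^sup>2"
    by (simp add: transition_op_def s_a_b_R_L_def scale_Suc)
  moreover have "R * (s + a)\<^sup>2 + L * (s - b)\<^sup>2 = (R + L) * s\<^sup>2 + 2 * s * (R * a - L * b) + R * a\<^sup>2 + L * b\<^sup>2"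
    by (simp add: power2_eq_square algebra_simps)
  ultimately show ?thesis by (simp add: s_a_b_R_L_def)
qed

lemma transition_op_scale_sq_ge:
  "x \<ge> 1 \<Longrightarrow> transition_op (\<lambda>x. (scale x)\<^sup>2) x - (scale x)\<^sup>2 \<ge> r x * (scale_incr x)\<^sup>2"
  using transition_op_scale_sq[of "x - 1"] l_pos[of x] by simp

lemma integral_scale_X_min_time:
  "is_stopping_time M X \<tau> \<Longrightarrow> (\<integral>\<omega>. scale (X (min_time \<tau> n \<omega>) \<omega>) \<partial>M) = scale k"
  by (simp add: dynkin_formula transition_op_scale)

section \<open>Absorption at zero\<close>

definition exit_time :: "nat \<Rightarrow> 'a \<Rightarrow> enat" where
  "exit_time N \<omega> =
     (if \<exists>j. X j \<omega> = 0 \<or> N \<le> X j \<omega> then enat (LEAST j. X j \<omega> = 0 \<or> N \<le> X j \<omega>) else \<infinity>)"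

lemma X_exit_time:
  assumes "exit_time N \<omega> = enat t"
  shows "X t \<omega> = 0 \<or> N \<le> X t \<omega>"
proof -
  have ex: "\<exists>j. X j \<omega> = 0 \<or> N \<le> X j \<omega>"
    using assms by (auto simp: exit_time_def split: if_splits)
  then have "t = (LEAST j. X j \<omega> = 0 \<or> N \<le> X j \<omega>)"
    using assms by (simp add: exit_time_def)
  then show ?thesis using LeastI_ex[OF ex] by simp
qed

lemma less_exit_time_iff: "enat n < exit_time N \<omega> \<longleftrightarrow> (\<forall>j\<le>n. X j \<omega> \<noteq> 0 \<and> X j \<omega> < N)"
proof (cases "\<exists>j. X j \<omega> = 0 \<or> N \<le> X j \<omega>")
  case True
  define t where "t = (LEAST j. X j \<omega> = 0 \<or> N \<le> X j \<omega>)"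
  have exit: "exit_time N \<omega> = enat t"
    using True by (simp add: exit_time_def t_def)
  have before: "X j \<omega> \<noteq> 0 \<and> X j \<omega> < N" if "j < t" for j
    using not_less_Least[of j "\<lambda>j. X j \<omega> = 0 \<or> N \<le> X j \<omega>"] that by (auto simp: t_def)
  show ?thesis
    unfolding exit enat_ord_simps(2)
  proof
    assume "n < t"
    then show "\<forall>j\<le>n. X j \<omega> \<noteq> 0 \<and> X j \<omega> < N" using before by auto
  next
    assume "\<forall>j\<le>n. X j \<omega> \<noteq> 0 \<and> X j \<omega> < N"
    then show "n < t" using X_exit_time[OF exit] by (meson not_le not_less)
  qed
next
  case False
  then have "exit_time N \<omega> = \<infinity>" by (simp only: exit_time_def if_False)
  then show ?thesis using False by (auto simp: not_le)
qed

lemma is_stopping_time_exit_time: "is_stopping_time M X (exit_time N)"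
  unfolding is_stopping_time_iff_less
proof
  fix n
  have "{\<omega>\<in>space M. enat n < exit_time N \<omega>} = (\<Inter>j\<in>{..n}. X j -` {x. x \<noteq> 0 \<and> x < N} \<inter> space M)"
    by (auto simp: less_exit_time_iff)
  also have "\<dots> \<in> nat_filtration M X n"
    using preimage_in_nat_filtration[of _ n "{x. x \<noteq> 0 \<and> x < N}"]
    by (intro sigma_algebra.countable_INT[OF sigma_algebra_nat_filtration]) auto
  finally show "{\<omega>\<in>space M. enat n < exit_time N \<omega>} \<in> nat_filtration M X n" .
qed

lemma sets_less_exit_time: "{\<omega>\<in>space M. enat n < exit_time N \<omega>} \<in> sets M"
  using is_stopping_time_exit_time[of N]
  by (auto simp: is_stopping_time_iff_less intro: sets_nat_filtration)

lemma X_min_exit_time_le: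
  assumes "k < N" "admissible \<omega>"
  shows "X (min_time (exit_time N) n \<omega>) \<omega> \<le> N"
proof (cases "enat n < exit_time N \<omega>")
  case True
  then show ?thesis
    using min_time_eq_bound[of n "exit_time N" \<omega>] less_imp_le[OF True] less_exit_time_iff[of n N \<omega>] by auto
next
  case False
  then obtain s where s: "exit_time N \<omega> = enat s" "s \<le> n" by (cases "exit_time N \<omega>") auto
  then have min_s: "min_time (exit_time N) n \<omega> = s" by (rule min_time_eq_time)
  show ?thesis
  proof (cases s)
    case 0
    then show ?thesis using min_s admissible_start[OF assms(2)] assms(1) by simp
  next
    case (Suc s')
    then have "X s' \<omega> < N" using s less_exit_time_iff[of s' N \<omega>] by auto
    then show ?thesis using min_s Suc admissible_X_Suc_le[OF assms(2), of s'] by simp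
  qed
qed

lemma sum_scale_sq_drift_le:
  assumes "k < N"
  shows "(\<Sum>j<n. \<integral>\<omega>. indicator {\<omega>\<in>space M. enat j < exit_time N \<omega>} \<omega> *
      (transition_op (\<lambda>x. (scale x)\<^sup>2) (X j \<omega>) - (scale (X j \<omega>))\<^sup>2) \<partial>M) \<le> (scale N)\<^sup>2"
proof -
  note exit_meas = measurable_min_time[OF measurable_stopping_time[OF is_stopping_time_exit_time]]
  have "(scale k)\<^sup>2 + (\<Sum>j<n. \<integral>\<omega>. indicator {\<omega>\<in>space M. enat j < exit_time N \<omega>} \<omega> *
      (transition_op (\<lambda>x. (scale x)\<^sup>2) (X j \<omega>) - (scale (X j \<omega>))\<^sup>2) \<partial>M)
      = (\<integral>\<omega>. (scale (X (min_time (exit_time N) n \<omega>) \<omega>))\<^sup>2 \<partial>M)"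
    using dynkin_formula[OF is_stopping_time_exit_time, of "\<lambda>x. (scale x)\<^sup>2" N n] by simp
  also have "\<dots> \<le> (\<integral>\<omega>. (scale N)\<^sup>2 \<partial>M)"
  proof (rule integral_mono_AE)
    show "integrable M (\<lambda>\<omega>. (scale (X (min_time (exit_time N) n \<omega>) \<omega>))\<^sup>2)"
      by (rule integrable_X_at[OF exit_meas min_time_le_bound])
    show "AE \<omega> in M. (scale (X (min_time (exit_time N) n \<omega>) \<omega>))\<^sup>2 \<le> (scale N)\<^sup>2"
      using AE_admissible
      by eventually_elim (intro power_mono scale_mono scale_nonneg X_min_exit_time_le assms)
  qed simp
  finally show ?thesis by (simp add: prob_space) (use zero_le_power2[of "scale k"] in linarith)
qed

lemma scale_sq_drift_bounded_below:
  assumes "1 \<le> N"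
  obtains \<delta> where "\<delta> > 0" "\<And>x. 1 \<le> x \<Longrightarrow> x \<le> N \<Longrightarrow> \<delta> \<le> transition_op (\<lambda>x. (scale x)\<^sup>2) x - (scale x)\<^sup>2"
proof
  define \<delta> where "\<delta> = Min ((\<lambda>x. r x * (scale_incr x)\<^sup>2) ` {1..N})"
  show "\<delta> > 0"
    unfolding \<delta>_def using assms
    by (subst Min_gr_iff) (auto intro!: mult_pos_pos r_pos simp: scale_incr_pos[THEN less_imp_neq, symmetric])
  fix x assume "1 \<le> x" "x \<le> N"
  then have "\<delta> \<le> r x * (scale_incr x)\<^sup>2" unfolding \<delta>_def by (intro Min_le) auto
  then show "\<delta> \<le> transition_op (\<lambda>x. (scale x)\<^sup>2) x - (scale x)\<^sup>2"
    using transition_op_scale_sq_ge[OF \<open>1 \<le> x\<close>] by linarith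
qed

text \<open>Before the exit time from \<open>(0, N)\<close>, \<open>scale\<^sup>2\<close> stays below \<open>(scale N)\<^sup>2\<close> but gains at least
  some \<open>\<delta> > 0\<close> per step in expectation, so the chain leaves \<open>(0, N)\<close> after \<open>n\<close> steps with
  probability \<open>O(1/n)\<close>.\<close>

lemma prob_not_exited_le:
  assumes "k < N"
  obtains \<delta> where "\<delta> > 0" "\<And>n. \<delta> * n * prob {\<omega>\<in>space M. enat n < exit_time N \<omega>} \<le> (scale N)\<^sup>2"
proof -
  define Q where "Q j = {\<omega>\<in>space M. enat j < exit_time N \<omega>}" for j
  have Q_sets[measurable]: "Q j \<in> sets M" for j
    unfolding Q_def by (rule sets_less_exit_time)
  obtain \<delta> where "\<delta> > 0"
    and \<delta>_le_drift: "\<And>x. 1 \<le> x \<Longrightarrow> x \<le> N \<Longrightarrow> \<delta> \<le> transition_op (\<lambda>x. (scale x)\<^sup>2) x - (scale x)\<^sup>2"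
    using scale_sq_drift_bounded_below[of N] assms by auto
  have \<delta>_prob_le: "\<delta> * prob (Q j) \<le> (\<integral>\<omega>. indicator (Q j) \<omega> * (transition_op (\<lambda>x. (scale x)\<^sup>2) (X j \<omega>) - (scale (X j \<omega>))\<^sup>2) \<partial>M)" for j
  proof -
    have "\<delta> * prob (Q j) = (\<integral>\<omega>. \<delta> * indicator (Q j) \<omega> \<partial>M)" by simp
    also have "\<dots> \<le> (\<integral>\<omega>. indicator (Q j) \<omega> * (transition_op (\<lambda>x. (scale x)\<^sup>2) (X j \<omega>) - (scale (X j \<omega>))\<^sup>2) \<partial>M)"
    proof (rule integral_mono)
      fix \<omega> assume "\<omega> \<in> space M"
      then show "\<delta> * indicator (Q j) \<omega> \<le> indicator (Q j) \<omega> * (transition_op (\<lambda>x. (scale x)\<^sup>2) (X j \<omega>) - (scale (X j \<omega>))\<^sup>2)"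
        using \<delta>_le_drift[of "X j \<omega>"] less_exit_time_iff[of j N \<omega>] by (auto simp: Q_def indicator_def)
    qed (auto intro!: integrable_real_indicator integrable_indicator_X simp: less_top[symmetric])
    finally show ?thesis .
  qed
  have bound: "\<delta> * n * prob (Q n) \<le> (scale N)\<^sup>2" for n
  proof -
    have "prob (Q n) \<le> prob (Q j)" if "j < n" for j
      using that by (intro finite_measure_mono Q_sets) (auto simp: Q_def elim: less_trans[rotated])
    then have "\<delta> * n * prob (Q n) \<le> (\<Sum>j<n. \<delta> * prob (Q j))"
      using \<open>\<delta> > 0\<close> sum_mono[of "{..<n}" "\<lambda>_. \<delta> * prob (Q n)" "\<lambda>j. \<delta> * prob (Q j)"]
      by (simp add: mult_ac)
    also have "\<dots> \<le> (\<Sum>j<n. \<integral>\<omega>. indicator (Q j) \<omega> *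
        (transition_op (\<lambda>x. (scale x)\<^sup>2) (X j \<omega>) - (scale (X j \<omega>))\<^sup>2) \<partial>M)"
      by (intro sum_mono \<delta>_prob_le)
    also have "\<dots> \<le> (scale N)\<^sup>2"
      using sum_scale_sq_drift_le[OF assms, of n] by (simp add: Q_def)
    finally show ?thesis .
  qed
  show ?thesis
    using that[of \<delta>] \<open>\<delta> > 0\<close> bound unfolding Q_def by blast
qed

lemma tendsto_prob_not_exited:
  assumes "k < N"
  shows "(\<lambda>n. prob {\<omega>\<in>space M. enat n < exit_time N \<omega>}) \<longlonglongrightarrow> 0"
proof -
  obtain \<delta> where \<delta>: "\<delta> > 0" "\<And>n. \<delta> * n * prob {\<omega>\<in>space M. enat n < exit_time N \<omega>} \<le> (scale N)\<^sup>2"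
    using prob_not_exited_le[OF assms] by blast
  have bound: "prob {\<omega>\<in>space M. enat n < exit_time N \<omega>} \<le> (scale N)\<^sup>2 / \<delta> / real n" if "n > 0" for n
  proof -
    have "prob {\<omega>\<in>space M. enat n < exit_time N \<omega>} * (\<delta> * n) \<le> (scale N)\<^sup>2"
      using \<delta>(2)[of n] by (simp add: mult_ac)
    then show ?thesis
      using \<delta>(1) that by (simp add: pos_le_divide_eq divide_divide_eq_left)
  qed
  show ?thesis
  proof (rule tendsto_sandwich[OF _ _ tendsto_const lim_const_over_n])
    show "\<forall>\<^sub>F n in sequentially. 0 \<le> prob {\<omega>\<in>space M. enat n < exit_time N \<omega>}"
      by simp
    show "\<forall>\<^sub>F n in sequentially. prob {\<omega>\<in>space M. enat n < exit_time N \<omega>} \<le> (scale N)\<^sup>2 / \<delta> / real n"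
      using eventually_gt_at_top[of 0] by eventually_elim (rule bound)
  qed
qed

lemma prob_exited_high_le:
  assumes "k < N"
  shows "scale N * prob {\<omega>\<in>space M. \<not> enat n < exit_time N \<omega> \<and> (\<forall>j. X j \<omega> \<noteq> 0)} \<le> scale k"
proof -
  define B where "B = {\<omega>\<in>space M. \<not> enat n < exit_time N \<omega> \<and> (\<forall>j. X j \<omega> \<noteq> 0)}"
  have B_sets: "B \<in> sets M"
    using sets_less_exit_time[of n N] unfolding B_def by measurable
  note exit_meas = measurable_min_time[OF measurable_stopping_time[OF is_stopping_time_exit_time]]
  have "scale N * prob B = (\<integral>\<omega>. scale N * indicator B \<omega> \<partial>M)" using B_sets by simp
  also have "\<dots> \<le> (\<integral>\<omega>. scale (X (min_time (exit_time N) n \<omega>) \<omega>) \<partial>M)"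
  proof (rule integral_mono)
    fix \<omega> assume "\<omega> \<in> space M"
    show "scale N * indicator B \<omega> \<le> scale (X (min_time (exit_time N) n \<omega>) \<omega>)"
    proof (cases "\<omega> \<in> B")
      case True
      then obtain s where s: "exit_time N \<omega> = enat s" "s \<le> n"
        by (cases "exit_time N \<omega>") (auto simp: B_def)
      moreover have "X s \<omega> \<noteq> 0" using True by (simp add: B_def)
      ultimately have "N \<le> X (min_time (exit_time N) n \<omega>) \<omega>"
        using X_exit_time[of N \<omega> s] min_time_eq_time[of "exit_time N" \<omega> s n] by simp
      then show ?thesis using True by (simp add: scale_mono)
    qed (simp add: scale_nonneg)
  qed (auto intro!: integrable_real_indicator integrable_X_at[OF exit_meas min_time_le_bound] B_sets
      simp: less_top[symmetric])
  also have "\<dots> = scale k"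
    by (rule integral_scale_X_min_time[OF is_stopping_time_exit_time])
  finally show ?thesis by (simp add: B_def)
qed

lemma prob_never_absorbed_le:
  assumes "k < N"
  shows "prob {\<omega>\<in>space M. \<forall>j. X j \<omega> \<noteq> 0} \<le> scale k / scale N"
proof -
  define Z where "Z = {\<omega>\<in>space M. \<forall>j. X j \<omega> \<noteq> 0}"
  define Q where "Q n = {\<omega>\<in>space M. enat n < exit_time N \<omega>}" for n
  define B where "B n = {\<omega>\<in>space M. \<not> enat n < exit_time N \<omega> \<and> (\<forall>j. X j \<omega> \<noteq> 0)}" for n
  have [measurable]: "Q n \<in> sets M" "B n \<in> sets M" for n
    using sets_less_exit_time[of n N] unfolding Q_def B_def by measurable
  have "scale N > 0" using assms by (intro scale_pos) simp
  have "prob Z \<le> scale k / scale N + prob (Q n)" for n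
  proof -
    have "Z \<subseteq> B n \<union> Q n" by (auto simp: Z_def B_def Q_def)
    then have "prob Z \<le> prob (B n \<union> Q n)" by (rule finite_measure_mono) measurable
    also have "\<dots> \<le> prob (B n) + prob (Q n)" by (rule measure_Un_le) auto
    also have "prob (B n) \<le> scale k / scale N"
      using prob_exited_high_le[OF assms, of n] \<open>scale N > 0\<close> by (simp add: B_def pos_le_divide_eq mult_ac)
    finally show ?thesis by simp
  qed
  moreover have "(\<lambda>n. scale k / scale N + prob (Q n)) \<longlonglongrightarrow> scale k / scale N"
    using tendsto_add[OF tendsto_const tendsto_prob_not_exited[OF assms]] by (simp add: Q_def)
  ultimately show ?thesis
    unfolding Z_def[symmetric] by (intro LIMSEQ_le_const) auto
qed

lemma AE_absorbed:
  assumes "filterlim scale at_top sequentially"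
  shows "AE \<omega> in M. \<exists>j. X j \<omega> = 0"
proof -
  define Z where "Z = {\<omega>\<in>space M. \<forall>j. X j \<omega> \<noteq> 0}"
  have "(\<lambda>N. scale k / scale N) \<longlonglongrightarrow> 0"
    by (rule tendsto_divide_0[OF tendsto_const filterlim_at_top_imp_at_infinity[OF assms]])
  moreover have "eventually (\<lambda>N. prob Z \<le> scale k / scale N) sequentially"
    using eventually_gt_at_top[of k] by eventually_elim (unfold Z_def, rule prob_never_absorbed_le)
  ultimately have "prob Z \<le> 0"
    by (rule tendsto_lowerbound) simp
  then have "prob Z = 0"
    using measure_nonneg[of M Z] by linarith
  moreover have "Z \<in> sets M"
    unfolding Z_def by measurable
  ultimately have "Z \<in> null_sets M"
    by (simp add: emeasure_eq_measure null_setsI)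
  then show ?thesis
    by (intro AE_I'[of Z]) (auto simp: Z_def)
qed

lemma measurable_stopped_value:
  "\<tau> \<in> M \<rightarrow>\<^sub>M count_space UNIV \<Longrightarrow> stopped_value X \<tau> \<in> M \<rightarrow>\<^sub>M count_space UNIV"
  unfolding stopped_value_def[abs_def]
  by (rule measurable_compose_countable'[where I=UNIV, of "\<lambda>t \<omega>. case t of enat n \<Rightarrow> X n \<omega> | \<infinity> \<Rightarrow> 0"])
    (auto split: enat.split)

lemma stopped_value_eventually_0:
  assumes "admissible \<omega>" and "\<exists>j. X j \<omega> = 0" and "\<And>m. T m \<omega> \<noteq> \<infinity>"
    and "(\<lambda>m. T m \<omega>) \<longlonglongrightarrow> hitting_time_0 X \<omega>"
  shows "eventually (\<lambda>m. stopped_value X (T m) \<omega> = 0) sequentially"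
proof -
  define t where "t = (LEAST n. X n \<omega> = 0)"
  have hit: "hitting_time_0 X \<omega> = enat t" and X_t: "X t \<omega> = 0"
    using assms(2) LeastI_ex[OF assms(2)] by (simp_all add: hitting_time_0_def t_def)
  have "eventually (\<lambda>m. enat t \<le> T m \<omega>) sequentially"
  proof (cases t)
    case (Suc t')
    have "eventually (\<lambda>m. enat t' < T m \<omega>) sequentially"
      using order_tendstoD(1)[OF assms(4)[unfolded hit], of "enat t'"] Suc by simp
    then show ?thesis by eventually_elim (simp add: Suc Suc_ile_eq)
  qed (simp add: zero_enat_def[symmetric])
  then show ?thesis
  proof eventually_elim
    case (elim m)
    then obtain s where "T m \<omega> = enat s" "t \<le> s"
      using assms(3)[of m] by (cases "T m \<omega>") auto
    then show ?case
      using admissible_absorbed[OF assms(1) X_t] by (simp add: stopped_value_def)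
  qed
qed

end

section \<open>Linear growth of the scale function\<close>

locale birth_death_summable = birth_death +
  assumes summable_drift: "summable (\<lambda>n. \<bar>1 - l (Suc n) / r (Suc n)\<bar>)"
begin

lemma scale_incr_convergent: "\<exists>L>0. scale_incr \<longlonglongrightarrow> L"
proof -
  define \<rho> where "\<rho> i = l (Suc i) / r (Suc i)" for i
  have \<rho>_pos: "\<rho> i > 0" for i
    unfolding \<rho>_def by (auto intro!: divide_pos_pos l_pos r_pos)
  have "summable (\<lambda>i. norm (\<rho> i - 1))"
    using summable_drift by (simp add: \<rho>_def abs_minus_commute)
  then have "convergent_prod \<rho>"
    by (intro abs_convergent_prod_imp_convergent_prod summable_imp_abs_convergent_prod)
  moreover have "\<rho> i \<noteq> 0" for i
    using \<rho>_pos[of i] by simp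
  ultimately obtain L where L: "(\<lambda>n. \<Prod>i\<le>n. \<rho> i) \<longlonglongrightarrow> L" "L \<noteq> 0"
    using convergent_prod_iff_nz_lim[of \<rho>] by blast
  have "(\<lambda>n. \<Prod>i\<le>n. \<rho> i) = (\<lambda>n. scale_incr (Suc n))"
    by (auto simp: scale_incr_def \<rho>_def lessThan_Suc_atMost[symmetric])
  with L(1) have "(\<lambda>n. scale_incr (Suc n)) \<longlonglongrightarrow> L" by simp
  then have lim: "scale_incr \<longlonglongrightarrow> L" by (rule LIMSEQ_imp_Suc)
  have "L \<ge> 0"
    by (rule LIMSEQ_le_const[OF lim]) (auto intro: less_imp_le[OF scale_incr_pos])
  with L(2) have "L > 0" by simp
  with lim show ?thesis by blast
qed

definition scale_slope :: real where
  "scale_slope = lim scale_incr"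

lemma scale_incr_tendsto: "scale_incr \<longlonglongrightarrow> scale_slope"
  and scale_slope_pos: "scale_slope > 0"
  using scale_incr_convergent limI unfolding scale_slope_def by blast+

lemma scale_incr_lower_bound:
  obtains c where "c > 0" "\<And>n. c \<le> scale_incr n"
proof -
  obtain N0 where N0: "\<And>n. n \<ge> N0 \<Longrightarrow> scale_incr n > scale_slope / 2"
    using order_tendstoD(1)[OF scale_incr_tendsto, of "scale_slope / 2"] scale_slope_pos
    by (auto simp: eventually_sequentially)
  define c where "c = min (scale_slope / 2) (Min (scale_incr ` {..N0}))"
  have "c > 0" using scale_slope_pos scale_incr_pos by (auto simp: c_def Min_gr_iff)
  moreover have "c \<le> scale_incr n" for n
  proof (cases "n \<le> N0")
    case True
    then show ?thesis unfolding c_def by (auto intro!: min.coboundedI2 Min_le)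
  next
    case False
    then show ?thesis using N0[of n] unfolding c_def by auto
  qed
  ultimately show ?thesis by (rule that)
qed

lemma scale_incr_upper_bound:
  obtains C where "\<And>n. scale_incr n \<le> C"
proof -
  obtain C where "\<And>n. norm (scale_incr n) \<le> C"
    using scale_incr_tendsto[THEN convergentI, THEN convergent_imp_Bseq] unfolding Bseq_def by auto
  then have "scale_incr n \<le> C" for n by (metis real_norm_def abs_le_D1)
  then show ?thesis by (rule that)
qed

lemma filterlim_scale_at_top: "filterlim scale at_top sequentially"
proof -
  obtain c where c: "c > 0" "\<And>n. c \<le> scale_incr n"
    using scale_incr_lower_bound by blast
  have "filterlim (\<lambda>x. c * real x) at_top sequentially"
    by (rule filterlim_tendsto_pos_mult_at_top[OF tendsto_const c(1) filterlim_real_sequentially])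
  then show ?thesis
    by (rule filterlim_at_top_mono) (intro always_eventually allI scale_ge_linear c(2))
qed

lemma scale_asymptotically_linear:
  fixes \<epsilon> :: real
  assumes "\<epsilon> > 0"
  obtains K where "\<And>x. \<bar>scale x - scale_slope * real x\<bar> \<le> \<epsilon> * real x + K"
proof -
  obtain N0 where N0: "\<And>n. n \<ge> N0 \<Longrightarrow> \<bar>scale_incr n - scale_slope\<bar> < \<epsilon>"
    using scale_incr_tendsto[unfolded LIMSEQ_def] assms by (auto simp: dist_real_def)
  define K where "K = (\<Sum>j<N0. \<bar>scale_incr j - scale_slope\<bar>)"
  have sum_le: "(\<Sum>j<x. \<bar>scale_incr j - scale_slope\<bar>) \<le> \<epsilon> * real x + K" for x
  proof (induction x)
    case 0
    then show ?case by (simp add: K_def sum_nonneg)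
  next
    case (Suc x)
    show ?case
    proof (cases "x < N0")
      case True
      then have "(\<Sum>j<Suc x. \<bar>scale_incr j - scale_slope\<bar>) \<le> K"
        unfolding K_def by (intro sum_mono2) auto
      then show ?thesis using assms by (simp add: add_increasing)
    next
      case False
      then show ?thesis using Suc.IH N0[of x] by (simp add: algebra_simps)
    qed
  qed
  have "\<bar>scale x - scale_slope * real x\<bar> \<le> \<epsilon> * real x + K" for x
  proof -
    have "scale x - scale_slope * real x = (\<Sum>j<x. scale_incr j - scale_slope)"
      by (simp add: scale_def sum_subtractf)
    then show ?thesis using sum_abs[of _ "{..<x}"] sum_le[of x] by (metis order_trans)
  qed
  then show ?thesis using that by blast
qed

section \<open>Stopped values at integrable stopping times\<close>

lemma integral_scale_stopped_value:
  assumes \<tau>: "is_stopping_time M X \<tau>" and fin: "(\<integral>\<^sup>+\<omega>. ennreal_of_enat (\<tau> \<omega>) \<partial>M) < \<infinity>"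
  shows "integrable M (\<lambda>\<omega>. scale (stopped_value X \<tau> \<omega>))"
    and "(\<integral>\<omega>. scale (stopped_value X \<tau> \<omega>) \<partial>M) = scale k"
proof -
  note \<tau>_meas = measurable_stopping_time[OF \<tau>]
  obtain C where C: "\<And>n. scale_incr n \<le> C"
    using scale_incr_upper_bound by blast
  define w where "w \<omega> = C * (k + (case \<tau> \<omega> of enat t \<Rightarrow> real t | \<infinity> \<Rightarrow> 0))" for \<omega>
  have w: "integrable M w"
    unfolding w_def using integrable_finite_part_enat[OF \<tau>_meas fin] by simp
  have meas: "(\<lambda>\<omega>. scale (stopped_value X \<tau> \<omega>)) \<in> borel_measurable M"
    using measurable_compose[OF measurable_stopped_value[OF \<tau>_meas], of scale] by simp
  have meas_n: "(\<lambda>\<omega>. scale (X (min_time \<tau> n \<omega>) \<omega>)) \<in> borel_measurable M" for n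
    using measurable_compose[OF measurable_X_at[OF measurable_min_time[OF \<tau>_meas]], of scale] by simp
  have lim: "AE \<omega> in M. (\<lambda>n. scale (X (min_time \<tau> n \<omega>) \<omega>)) \<longlonglongrightarrow> scale (stopped_value X \<tau> \<omega>)"
    using AE_finite_of_nn_integral_enat[OF \<tau>_meas fin]
  proof eventually_elim
    case (elim \<omega>)
    then obtain t where t: "\<tau> \<omega> = enat t" by auto
    have "eventually (\<lambda>n. scale (X (min_time \<tau> n \<omega>) \<omega>) = scale (stopped_value X \<tau> \<omega>)) sequentially"
      using eventually_ge_at_top[of t] by eventually_elim (simp add: min_time_eq_time[of \<tau> \<omega> t] stopped_value_def t)
    then show ?case by (rule tendsto_eventually)
  qed
  have bound: "AE \<omega> in M. norm (scale (X (min_time \<tau> n \<omega>) \<omega>)) \<le> w \<omega>" for n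
    using AE_finite_of_nn_integral_enat[OF \<tau>_meas fin] AE_admissible
  proof eventually_elim
    case (elim \<omega>)
    then obtain t where t: "\<tau> \<omega> = enat t" by auto
    then show ?case
      using scale_X_min_time_le[of C \<omega> \<tau> t n, OF C elim(2) t] scale_nonneg by (simp add: w_def)
  qed
  show "integrable M (\<lambda>\<omega>. scale (stopped_value X \<tau> \<omega>))"
    by (rule integrable_dominated_convergence[OF meas meas_n w lim bound])
  have "(\<lambda>n. \<integral>\<omega>. scale (X (min_time \<tau> n \<omega>) \<omega>) \<partial>M) \<longlonglongrightarrow> (\<integral>\<omega>. scale (stopped_value X \<tau> \<omega>) \<partial>M)"
    by (rule integral_dominated_convergence[OF meas meas_n w lim bound])
  then show "(\<integral>\<omega>. scale (stopped_value X \<tau> \<omega>) \<partial>M) = scale k"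
    by (simp add: integral_scale_X_min_time[OF \<tau>] LIMSEQ_const_iff)
qed

lemma integrable_stopped_value:
  assumes \<tau>: "is_stopping_time M X \<tau>" and fin: "(\<integral>\<^sup>+\<omega>. ennreal_of_enat (\<tau> \<omega>) \<partial>M) < \<infinity>"
    and c: "c > 0" "\<And>n. c \<le> scale_incr n"
  shows "integrable M (\<lambda>\<omega>. real (stopped_value X \<tau> \<omega>))"
    and "(\<integral>\<omega>. real (stopped_value X \<tau> \<omega>) \<partial>M) \<le> scale k / c"
proof -
  have le: "real (stopped_value X \<tau> \<omega>) \<le> scale (stopped_value X \<tau> \<omega>) / c" for \<omega>
    using scale_ge_linear[OF c(2)] c(1) by (simp add: pos_le_divide_eq mult.commute)
  have int: "integrable M (\<lambda>\<omega>. scale (stopped_value X \<tau> \<omega>) / c)"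
    using integral_scale_stopped_value(1)[OF \<tau> fin] by simp
  show int_real: "integrable M (\<lambda>\<omega>. real (stopped_value X \<tau> \<omega>))"
  proof (rule Bochner_Integration.integrable_bound[OF int])
    show "(\<lambda>\<omega>. real (stopped_value X \<tau> \<omega>)) \<in> borel_measurable M"
      using measurable_compose[OF measurable_stopped_value[OF measurable_stopping_time[OF \<tau>]], of real]
      by simp
    show "AE \<omega> in M. norm (real (stopped_value X \<tau> \<omega>)) \<le> norm (scale (stopped_value X \<tau> \<omega>) / c)"
      using le c(1) by (intro AE_I2) (simp add: abs_of_nonneg[OF scale_nonneg])
  qed
  have "(\<integral>\<omega>. real (stopped_value X \<tau> \<omega>) \<partial>M) \<le> (\<integral>\<omega>. scale (stopped_value X \<tau> \<omega>) / c \<partial>M)"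
    by (intro integral_mono int_real int le)
  then show "(\<integral>\<omega>. real (stopped_value X \<tau> \<omega>) \<partial>M) \<le> scale k / c"
    using integral_scale_stopped_value(2)[OF \<tau> fin] by simp
qed

lemma integral_stopped_value_deviation:
  fixes \<epsilon> K :: real
  assumes \<tau>: "is_stopping_time M X \<tau>" and fin: "(\<integral>\<^sup>+\<omega>. ennreal_of_enat (\<tau> \<omega>) \<partial>M) < \<infinity>"
    and K: "\<And>x. \<bar>scale x - scale_slope * real x\<bar> \<le> \<epsilon> * real x + K"
  shows "\<bar>scale_slope * (\<integral>\<omega>. real (stopped_value X \<tau> \<omega>) \<partial>M) - scale k\<bar>
    \<le> \<epsilon> * (\<integral>\<omega>. real (stopped_value X \<tau> \<omega>) \<partial>M) + K * prob {\<omega>\<in>space M. stopped_value X \<tau> \<omega> \<noteq> 0}"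
proof -
  define S where "S = stopped_value X \<tau>"
  define A where "A = {\<omega>\<in>space M. S \<omega> \<noteq> 0}"
  obtain c where c: "c > 0" "\<And>n. c \<le> scale_incr n"
    using scale_incr_lower_bound by blast
  have int_S: "integrable M (\<lambda>\<omega>. real (S \<omega>))"
    unfolding S_def by (rule integrable_stopped_value(1)[OF \<tau> fin c])
  have int_scale: "integrable M (\<lambda>\<omega>. scale (S \<omega>))"
    unfolding S_def by (rule integral_scale_stopped_value(1)[OF \<tau> fin])
  have A_sets: "A \<in> sets M"
    using measurable_sets[OF measurable_stopped_value[OF measurable_stopping_time[OF \<tau>]], of "-{0}"]
    by (simp add: A_def S_def vimage_def Int_def conj_commute)
  have int_A: "integrable M (\<lambda>\<omega>. K * indicator A \<omega>)"
    using A_sets by (intro integrable_mult_right integrable_real_indicator) (simp_all add: less_top[symmetric])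
  have pointwise: "\<bar>scale_slope * real (S \<omega>) - scale (S \<omega>)\<bar> \<le> \<epsilon> * real (S \<omega>) + K * indicator A \<omega>"
    if "\<omega> \<in> space M" for \<omega>
  proof (cases "S \<omega> = 0")
    case False
    then show ?thesis using K[of "S \<omega>"] that by (simp add: A_def abs_minus_commute)
  qed (simp add: A_def)
  have "scale_slope * (\<integral>\<omega>. real (S \<omega>) \<partial>M) - scale k
      = (\<integral>\<omega>. scale_slope * real (S \<omega>) - scale (S \<omega>) \<partial>M)"
    using int_S int_scale integral_scale_stopped_value(2)[OF \<tau> fin] by (simp add: S_def)
  then have "\<bar>scale_slope * (\<integral>\<omega>. real (S \<omega>) \<partial>M) - scale k\<bar>
      \<le> (\<integral>\<omega>. \<bar>scale_slope * real (S \<omega>) - scale (S \<omega>)\<bar> \<partial>M)"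
    by (simp add: integral_abs_bound)
  also have "\<dots> \<le> (\<integral>\<omega>. \<epsilon> * real (S \<omega>) + K * indicator A \<omega> \<partial>M)"
    using int_S int_scale int_A pointwise by (intro integral_mono) auto
  also have "\<dots> = \<epsilon> * (\<integral>\<omega>. real (S \<omega>) \<partial>M) + K * prob A"
    using int_S int_A A_sets by simp
  finally show ?thesis by (simp add: S_def A_def)
qed

lemma tendsto_prob_stopped_value_nonzero:
  assumes stop: "\<And>m. is_stopping_time M X (T m)"
    and fin: "\<And>m. (\<integral>\<^sup>+\<omega>. ennreal_of_enat (T m \<omega>) \<partial>M) < \<infinity>"
    and conv: "AE \<omega> in M. (\<lambda>m. T m \<omega>) \<longlonglongrightarrow> hitting_time_0 X \<omega>"
  shows "(\<lambda>m. prob {\<omega>\<in>space M. stopped_value X (T m) \<omega> \<noteq> 0}) \<longlonglongrightarrow> 0"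
proof -
  define A where "A m = {\<omega>\<in>space M. stopped_value X (T m) \<omega> \<noteq> 0}" for m
  have A_sets: "A m \<in> sets M" for m
    using measurable_sets[OF measurable_stopped_value[OF measurable_stopping_time[OF stop]], of "-{0}"]
    by (auto simp: A_def vimage_def Int_def conj_commute)
  have "AE \<omega> in M. \<forall>m. T m \<omega> \<noteq> \<infinity>"
    using AE_finite_of_nn_integral_enat[OF measurable_stopping_time[OF stop] fin] by (simp add: AE_all_countable)
  then have indicator_lim: "AE \<omega> in M. (\<lambda>m. indicator (A m) \<omega>) \<longlonglongrightarrow> (0::real)"
    using conv AE_absorbed[OF filterlim_scale_at_top] AE_admissible AE_space
  proof eventually_elim
    case (elim \<omega>)
    have "eventually (\<lambda>m. stopped_value X (T m) \<omega> = 0) sequentially"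
      using elim(1) by (intro stopped_value_eventually_0[of \<omega> T, OF elim(4) elim(3) _ elim(2)]) auto
    then have "eventually (\<lambda>m. indicator (A m) \<omega> = (0::real)) sequentially"
      by eventually_elim (simp add: A_def)
    then show ?case by (rule tendsto_eventually)
  qed
  have "(\<lambda>m. \<integral>\<omega>. indicator (A m) \<omega> \<partial>M) \<longlonglongrightarrow> (\<integral>\<omega>. (0::real) \<partial>M)"
    by (rule integral_dominated_convergence[where w="\<lambda>_. 1", OF _ _ _ indicator_lim]) (auto intro: borel_measurable_indicator A_sets)
  then show ?thesis
    using A_sets by (simp add: A_def)
qed

lemma tendsto_integral_stopped_value:
  assumes stop: "\<And>m. is_stopping_time M X (T m)"
    and fin: "\<And>m. (\<integral>\<^sup>+\<omega>. ennreal_of_enat (T m \<omega>) \<partial>M) < \<infinity>"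
    and conv: "AE \<omega> in M. (\<lambda>m. T m \<omega>) \<longlonglongrightarrow> hitting_time_0 X \<omega>"
  shows "(\<lambda>m. \<integral>\<omega>. real (stopped_value X (T m) \<omega>) \<partial>M) \<longlonglongrightarrow> scale k / scale_slope"
proof -
  define a where "a m = (\<integral>\<omega>. real (stopped_value X (T m) \<omega>) \<partial>M)" for m
  define P where "P m = prob {\<omega>\<in>space M. stopped_value X (T m) \<omega> \<noteq> 0}" for m
  obtain c where c: "c > 0" "\<And>n. c \<le> scale_incr n"
    using scale_incr_lower_bound by blast
  define B where "B = scale k / c"
  have a_le: "a m \<le> B" and a_nonneg: "0 \<le> a m" for m
    using integrable_stopped_value(2)[OF stop fin c] by (simp_all add: a_def B_def)
  have "B \<ge> 0" using a_le a_nonneg order_trans by blast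
  have P: "P \<longlonglongrightarrow> 0"
    unfolding P_def using tendsto_prob_stopped_value_nonzero[OF stop fin conv] .
  have "(\<lambda>m. scale_slope * a m) \<longlonglongrightarrow> scale k"
  proof (rule tendsto_of_deviation_bound[OF P])
    fix \<epsilon> :: real assume "\<epsilon> > 0"
    then have "\<epsilon> / (B + 1) > 0" using \<open>B \<ge> 0\<close> by simp
    then obtain K where K: "\<And>x. \<bar>scale x - scale_slope * real x\<bar> \<le> \<epsilon> / (B + 1) * real x + K"
      using scale_asymptotically_linear by blast
    have "\<bar>scale_slope * a m - scale k\<bar> \<le> \<epsilon> + K * P m" for m
    proof -
      have "\<bar>scale_slope * a m - scale k\<bar> \<le> \<epsilon> / (B + 1) * a m + K * P m"
        unfolding a_def P_def by (rule integral_stopped_value_deviation[OF stop fin K])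
      moreover have "\<epsilon> / (B + 1) * a m \<le> \<epsilon> / (B + 1) * (B + 1)"
        using a_le[of m] \<open>\<epsilon> / (B + 1) > 0\<close> by (intro mult_left_mono) auto
      ultimately show ?thesis using \<open>B \<ge> 0\<close> by simp
    qed
    then show "\<exists>K. \<forall>m. \<bar>scale_slope * a m - scale k\<bar> \<le> \<epsilon> + K * P m" by blast
  qed
  then have "(\<lambda>m. scale_slope * a m / scale_slope) \<longlonglongrightarrow> scale k / scale_slope"
    using scale_slope_pos by (intro tendsto_divide tendsto_const) simp_all
  then show ?thesis
    using scale_slope_pos by (simp add: a_def)
qed

lemma tendsto_nn_integral_stopped_value:
  assumes stop: "\<And>m. is_stopping_time M X (T m)"
    and fin: "\<And>m. (\<integral>\<^sup>+\<omega>. ennreal_of_enat (T m \<omega>) \<partial>M) < \<infinity>"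
    and conv: "AE \<omega> in M. (\<lambda>m. T m \<omega>) \<longlonglongrightarrow> hitting_time_0 X \<omega>"
  shows "(\<lambda>m. \<integral>\<^sup>+\<omega>. of_nat (stopped_value X (T m) \<omega>) \<partial>M) \<longlonglongrightarrow> ennreal (scale k / scale_slope)"
proof -
  obtain c where c: "c > 0" "\<And>n. c \<le> scale_incr n"
    using scale_incr_lower_bound by blast
  have "(\<integral>\<^sup>+\<omega>. of_nat (stopped_value X (T m) \<omega>) \<partial>M) = ennreal (\<integral>\<omega>. real (stopped_value X (T m) \<omega>) \<partial>M)" for m
    using integrable_stopped_value(1)[OF stop fin c]
    by (simp add: ennreal_of_nat_eq_real_of_nat nn_integral_eq_integral)
  then show ?thesis
    using tendsto_integral_stopped_value[OF stop fin conv] by (simp add: tendsto_ennrealI)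
qed

end

theorem proposition1:
  fixes M :: "'a measure" and l r :: "nat \<Rightarrow> real" and k :: nat
    and X :: "nat \<Rightarrow> 'a \<Rightarrow> nat" and T :: "nat \<Rightarrow> 'a \<Rightarrow> enat"
  assumes lpos: "\<And>n. n \<ge> 1 \<Longrightarrow> l n > 0"
    and rpos: "\<And>n. n \<ge> 1 \<Longrightarrow> r n > 0"
    and lr: "\<And>n. n \<ge> 1 \<Longrightarrow> l n + r n = 1"
    and k: "k \<ge> 1"
    and chain: "birth_death_chain M l r k X"
    and summ: "summable (\<lambda>n. \<bar>1 - l (Suc n) / r (Suc n)\<bar>)"
    and stop: "\<And>m. is_stopping_time M X (T m)"
    and mono: "\<And>m \<omega>. \<omega> \<in> space M \<Longrightarrow> T m \<omega> \<le> T (Suc m) \<omega>"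
    and finE: "\<And>m. (\<integral>\<^sup>+ \<omega>. ennreal_of_enat (T m \<omega>) \<partial>M) < \<infinity>"
    and conv: "AE \<omega> in M. (\<lambda>m. T m \<omega>) \<longlonglongrightarrow> hitting_time_0 X \<omega>"
  shows "\<exists>L::ennreal. 0 < L \<and> L < \<infinity> \<and>
           (\<lambda>m. \<integral>\<^sup>+ \<omega>. of_nat (stopped_value X (T m) \<omega>) \<partial>M) \<longlonglongrightarrow> L"
proof -
  interpret birth_death_summable M l r k X
    using lpos rpos lr chain summ by unfold_locales
  have "scale k / scale_slope > 0"
    using scale_pos[OF k] scale_slope_pos by simp
  then show ?thesis
    using tendsto_nn_integral_stopped_value[OF stop finE conv]
    by (intro exI[of _ "ennreal (scale k / scale_slope)"]) simp
qed

end
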